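(* Let $t$ be a positive integer and let $G$ be a graph containing no copy of $\theta_{3,t}[2]$. Let $x,x',y,y'$ be distinct vertices of $G$ and let $R\subset N(y,y')\setminus\{x,x'\}$. Then the number of ordered pairs $(z,z')\in R^2$ of distinct vertices with $d(x,x',z,z')\ge 6t$ is at most $4t|R|$.
   Context: For vertices $v_1,\dots,v_k$ of a graph, $N(v_1,\dots,v_k)$ denotes their common neighbourhood and $d(v_1,\dots,v_k)=|N(v_1,\dots,v_k)|$. The theta graph $\theta_{3,t}$ is the union of $t$ paths of length $3$ sharing the same two endpoints and pairwise internally vertex-disjoint; $F[2]$ is obtained from a graph $F$ by replacing each vertex by an independent set of size $2$ and each edge by a copy of $K_{2,2}$ between the corresponding sets. *)

theory Defs
  imports Main
begin

definition simple_graph :: "'a set \<Rightarrow> ('a \<Rightarrow> 'a \<Rightarrow> bool) \<Rightarrow> bool" where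
  "simple_graph V E \<longleftrightarrow> finite V \<and> (\<forall>u v. E u v \<longrightarrow> u \<in> V \<and> v \<in> V)
     \<and> (\<forall>u v. E u v \<longrightarrow> E v u) \<and> (\<forall>v. \<not> E v v)"

definition common_nbhd :: "'a set \<Rightarrow> ('a \<Rightarrow> 'a \<Rightarrow> bool) \<Rightarrow> 'a set \<Rightarrow> 'a set" where
  "common_nbhd V E S = {w \<in> V. \<forall>v\<in>S. E v w}"

definition codeg :: "'a set \<Rightarrow> ('a \<Rightarrow> 'a \<Rightarrow> bool) \<Rightarrow> 'a set \<Rightarrow> nat" where
  "codeg V E S = card (common_nbhd V E S)"

definition contains_copy :: "'a set \<Rightarrow> ('a \<Rightarrow> 'a \<Rightarrow> bool) \<Rightarrow> 'b set \<Rightarrow> ('b \<Rightarrow> 'b \<Rightarrow> bool) \<Rightarrow> bool" where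
  "contains_copy V E VH EH \<longleftrightarrow> (\<exists>f. inj_on f VH \<and> f ` VH \<subseteq> V \<and>
      (\<forall>u\<in>VH. \<forall>v\<in>VH. EH u v \<longrightarrow> E (f u) (f v)))"

text \<open>Theta graph theta_{3,t}: endpoints A, B and t internally disjoint paths A - U i - W i - B.\<close>
datatype theta_vertex = ThA | ThB | ThU nat | ThW nat

definition theta_V :: "nat \<Rightarrow> theta_vertex set" where
  "theta_V t = {ThA, ThB} \<union> ThU ` {..<t} \<union> ThW ` {..<t}"

fun theta_E0 :: "theta_vertex \<Rightarrow> theta_vertex \<Rightarrow> bool" where
  "theta_E0 ThA (ThU i) = True"
| "theta_E0 (ThU i) (ThW j) = (i = j)"
| "theta_E0 (ThW i) ThB = True"
| "theta_E0 _ _ = False"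

definition theta_E :: "nat \<Rightarrow> theta_vertex \<Rightarrow> theta_vertex \<Rightarrow> bool" where
  "theta_E t u v \<longleftrightarrow> u \<in> theta_V t \<and> v \<in> theta_V t \<and> (theta_E0 u v \<or> theta_E0 v u)"

text \<open>Blow-up F[2]: each vertex replaced by an independent pair, each edge by K_{2,2}.\<close>
definition blowup2_V :: "'b set \<Rightarrow> ('b \<times> bool) set" where
  "blowup2_V VF = VF \<times> UNIV"

definition blowup2_E :: "('b \<Rightarrow> 'b \<Rightarrow> bool) \<Rightarrow> ('b \<times> bool) \<Rightarrow> ('b \<times> bool) \<Rightarrow> bool" where
  "blowup2_E EF p q \<longleftrightarrow> EF (fst p) (fst q)"

end

(*
  Suppose there are more than 4t|R| such pairs. A set S of fewer than 2t vertices meets at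
  most 2|S||R| < 4t|R| ordered pairs from R, so t vertex-disjoint pairs {w_i, w_i'} can be chosen
  greedily. Each has at least 6t common neighbours with x and x'; discarding y, y', the 2t
  vertices w and the at most 2t - 2 vertices already used leaves two vertices, so disjoint pairs
  {u_i, u_i'} of common neighbours of x, x', w_i, w_i' can be chosen greedily as well. Then
  {x, x'}, {u_i, u_i'}, {w_i, w_i'}, {y, y'} are the vertex pairs of a copy of theta_{3,t}[2].
*)
theory Submission
  imports Defs
begin

lemma card_case_prod_image_le: "card (case_prod W ` ({..<k} \<times> (UNIV :: bool set))) \<le> 2 * k"
proof -
  have "card (case_prod W ` ({..<k} \<times> (UNIV :: bool set))) \<le> card ({..<k} \<times> (UNIV :: bool set))"
    by (rule card_image_le) simp
  also have "\<dots> = 2 * k" by (simp add: card_cartesian_product)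
  finally show ?thesis .
qed

text \<open>A family of pairs is encoded as \<open>W :: nat \<Rightarrow> bool \<Rightarrow> 'a\<close>, the \<open>i\<close>-th pair being
  \<open>W i False, W i True\<close>; injectivity of \<open>case_prod W\<close> on \<open>{..<k} \<times> UNIV\<close> says that the
  \<open>2 * k\<close> vertices are distinct.\<close>

lemma greedy_disjoint_pairs:
  fixes P :: "nat \<Rightarrow> 'a \<Rightarrow> 'a \<Rightarrow> bool"
  assumes "\<And>i S. i < k \<Longrightarrow> finite S \<Longrightarrow> card S \<le> 2 * i \<Longrightarrow> \<exists>a b. a \<noteq> b \<and> a \<notin> S \<and> b \<notin> S \<and> P i a b"
  shows "\<exists>W. (\<forall>i<k. P i (W i False) (W i True)) \<and> inj_on (case_prod W) ({..<k} \<times> UNIV)"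
  using assms
proof (induction k)
  case 0
  show ?case by simp
next
  case (Suc k)
  then obtain W where W: "\<forall>i<k. P i (W i False) (W i True)" "inj_on (case_prod W) ({..<k} \<times> UNIV)"
    by (metis less_SucI)
  define S where "S = case_prod W ` ({..<k} \<times> UNIV)"
  have "finite S" "card S \<le> 2 * k"
    unfolding S_def using card_case_prod_image_le by auto
  then obtain a b where ab: "a \<noteq> b" "a \<notin> S" "b \<notin> S" "P k a b"
    using Suc.prems by blast
  define W' where "W' = W(k := (\<lambda>c. if c then b else a))"
  have "\<forall>i<Suc k. P i (W' i False) (W' i True)"
    using W(1) ab(4) by (simp add: W'_def less_Suc_eq)
  moreover have "inj_on (case_prod W') ({..<Suc k} \<times> UNIV)"
  proof (rule inj_onI, clarify)
    fix i c j d
    assume "i < Suc k" "j < Suc k" "W' i c = W' j d"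
    then show "i = j \<and> c = d"
      using inj_onD[OF W(2), of "(i, c)" "(j, d)"] ab(1-3)
      by (cases "i = k"; cases "j = k") (auto simp: W'_def S_def split: if_splits)
  qed
  ultimately show ?case by blast
qed

lemma card_pairs_meeting_le:
  assumes "finite R"
  shows "card {p \<in> R \<times> R. fst p \<in> S \<or> snd p \<in> S} \<le> 2 * card (S \<inter> R) * card R"
proof -
  have "{p \<in> R \<times> R. fst p \<in> S \<or> snd p \<in> S} = (S \<inter> R) \<times> R \<union> R \<times> (S \<inter> R)"
    by auto
  also have "card \<dots> \<le> card ((S \<inter> R) \<times> R) + card (R \<times> (S \<inter> R))"
    by (rule card_Un_le)
  also have "\<dots> = 2 * card (S \<inter> R) * card R"
    by (simp add: card_cartesian_product)
  finally show ?thesis .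
qed

lemma disjoint_pairs_from_many_pairs:
  assumes "finite R" "P \<subseteq> R \<times> R" "\<And>z. (z, z) \<notin> P" "4 * t * card R < card P"
  shows "\<exists>W. (\<forall>i<t. (W i False, W i True) \<in> P) \<and> inj_on (case_prod W) ({..<t} \<times> UNIV)"
proof (rule greedy_disjoint_pairs)
  fix i and S :: "'a set"
  assume "i < t" "finite S" "card S \<le> 2 * i"
  define M where "M = {p \<in> R \<times> R. fst p \<in> S \<or> snd p \<in> S}"
  have "card (S \<inter> R) \<le> card S"
    using \<open>finite S\<close> by (intro card_mono) auto
  then have "2 * card (S \<inter> R) \<le> 4 * t"
    using \<open>i < t\<close> \<open>card S \<le> 2 * i\<close> by linarith
  then have "2 * card (S \<inter> R) * card R \<le> 4 * t * card R"
    by (rule mult_le_mono1)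
  then have "card M \<le> 4 * t * card R"
    using card_pairs_meeting_le[OF assms(1), of S] unfolding M_def by linarith
  moreover have "card P \<le> card M" if "P \<subseteq> M"
    using that assms(1) by (intro card_mono) (simp_all add: M_def)
  ultimately have "\<not> P \<subseteq> M"
    using assms(4) by linarith
  then obtain a b where ab: "(a, b) \<in> P" "(a, b) \<notin> M"
    by auto
  moreover have "a \<noteq> b"
    using ab(1) assms(3) by blast
  moreover have "a \<in> R" "b \<in> R"
    using ab(1) assms(2) by auto
  ultimately show "\<exists>a b. a \<noteq> b \<and> a \<notin> S \<and> b \<notin> S \<and> (a, b) \<in> P"
    unfolding M_def by auto
qed

lemma disjoint_pairs_in_large_sets:
  assumes "finite X" "\<And>i. i < t \<Longrightarrow> finite (N i) \<and> card X + 2 * t \<le> card (N i)"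
  shows "\<exists>U :: nat \<Rightarrow> bool \<Rightarrow> 'a. (\<forall>i<t. \<forall>b. U i b \<in> N i - X) \<and> inj_on (case_prod U) ({..<t} \<times> UNIV)"
proof -
  have "\<exists>a b. a \<noteq> b \<and> a \<notin> S \<and> b \<notin> S \<and> a \<in> N i - X \<and> b \<in> N i - X"
    if "i < t" "finite S" "card S \<le> 2 * i" for i S
  proof -
    have "card (N i) - card (X \<union> S) \<le> card (N i - (X \<union> S))"
      using assms(1) that(2) by (intro diff_card_le_card_Diff) simp
    also have "N i - (X \<union> S) = N i - X - S"
      by blast
    finally have "card (N i) - card (X \<union> S) \<le> card (N i - X - S)" .
    moreover have "card (X \<union> S) \<le> card X + card S" by (rule card_Un_le)
    ultimately have "Suc (Suc 0) \<le> card (N i - X - S)"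
      using assms(2)[OF that(1)] that by linarith
    then show ?thesis
      by (auto simp: card_le_Suc_iff)
  qed
  then obtain U where U: "\<forall>i<t. U i False \<in> N i - X \<and> U i True \<in> N i - X"
    and "inj_on (case_prod U) ({..<t} \<times> UNIV)"
    using greedy_disjoint_pairs[of t "\<lambda>i a b. a \<in> N i - X \<and> b \<in> N i - X"] by blast
  moreover have "\<forall>i<t. \<forall>b. U i b \<in> N i - X"
    using U by (metis (full_types))
  ultimately show ?thesis by blast
qed

lemma contains_theta_blowupI:
  fixes U W :: "nat \<Rightarrow> bool \<Rightarrow> 'a"
  assumes G: "simple_graph V E"
    and "distinct [x, x', y, y']" "x \<in> V" "x' \<in> V" "y \<in> V" "y' \<in> V"
    and inj_U: "inj_on (case_prod U) ({..<t} \<times> UNIV)"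
    and inj_W: "inj_on (case_prod W) ({..<t} \<times> UNIV)"
    and U: "\<And>i b. i < t \<Longrightarrow>
      U i b \<in> common_nbhd V E {x, x', W i False, W i True} - ({y, y'} \<union> case_prod W ` ({..<t} \<times> UNIV))"
    and W: "\<And>i b. i < t \<Longrightarrow> W i b \<in> common_nbhd V E {y, y'} - {x, x'}"
  shows "contains_copy V E (blowup2_V (theta_V t)) (blowup2_E (theta_E t))"
proof -
  have sym: "E u v \<Longrightarrow> E v u" and irrefl: "\<not> E v v" for u v
    using G unfolding simple_graph_def by blast+
  define f where "f = (\<lambda>(v, b). case v of ThA \<Rightarrow> if b then x' else x | ThB \<Rightarrow> if b then y' else y
    | ThU i \<Rightarrow> U i b | ThW i \<Rightarrow> W i b)"
  have f_simps: "f (ThA, b) = (if b then x' else x)" "f (ThB, b) = (if b then y' else y)"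
    "f (ThU i, b) = U i b" "f (ThW i, b) = W i b" for i b
    by (simp_all add: f_def)
  have theta_V_iff: "ThU i \<in> theta_V t \<longleftrightarrow> i < t" "ThW i \<in> theta_V t \<longleftrightarrow> i < t"
    "ThA \<in> theta_V t" "ThB \<in> theta_V t" for i
    unfolding theta_V_def by auto
  have U_adj: "E x (U i b) \<and> E x' (U i b) \<and> E (U i b) (W i c)" if "i < t" for i b c
    using U[OF that, of b] sym by (cases c) (auto simp: common_nbhd_def)
  have W_adj: "E (W i b) y \<and> E (W i b) y'" if "i < t" for i b
    using W[OF that, of b] sym by (auto simp: common_nbhd_def)
  have U_ne: "U i b \<noteq> x" "U i b \<noteq> x'" "U i b \<noteq> y" "U i b \<noteq> y'" "U i b \<noteq> W j c"
    if "i < t" "j < t" for i j b c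
    using U[OF that(1), of b] U_adj[OF that(1), of b c] irrefl that(2) by fastforce+
  have W_ne: "W i b \<noteq> x" "W i b \<noteq> x'" "W i b \<noteq> y" "W i b \<noteq> y'" if "i < t" for i b
    using W[OF that, of b] W_adj[OF that, of b] irrefl by fastforce+
  have "inj_on f (blowup2_V (theta_V t))"
  proof (rule inj_onI, clarify)
    fix v b w c
    assume "(v, b) \<in> blowup2_V (theta_V t)" "(w, c) \<in> blowup2_V (theta_V t)" "f (v, b) = f (w, c)"
    then show "v = w \<and> b = c"
      using assms(2) U_ne W_ne U_ne[THEN not_sym] W_ne[THEN not_sym]
        inj_onD[OF inj_U, of "(_, b)" "(_, c)"] inj_onD[OF inj_W, of "(_, b)" "(_, c)"]
      by (cases v; cases w; cases b; cases c) (simp_all add: blowup2_V_def f_simps theta_V_iff)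
  qed
  moreover have "f ` blowup2_V (theta_V t) \<subseteq> V"
    using assms(3-6) U W by (auto simp: blowup2_V_def theta_V_def f_simps common_nbhd_def)
  moreover have "E (f (v, b)) (f (w, c))"
    if "blowup2_E (theta_E t) (v, b) (w, c)" for v b w c
    using that U_adj W_adj sym
    by (cases v; cases w) (auto simp: blowup2_E_def theta_E_def f_simps theta_V_iff)
  ultimately show ?thesis
    unfolding contains_copy_def by (intro exI[of _ f]) auto
qed

lemma contains_theta_blowup_from_codegree_pairs:
  fixes W :: "nat \<Rightarrow> bool \<Rightarrow> 'a"
  assumes G: "simple_graph V E" and "t \<ge> 1"
    and "distinct [x, x', y, y']" "x \<in> V" "x' \<in> V" "y \<in> V" "y' \<in> V"
    and inj_W: "inj_on (case_prod W) ({..<t} \<times> UNIV)"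
    and W: "\<And>i b. i < t \<Longrightarrow> W i b \<in> common_nbhd V E {y, y'} - {x, x'}"
    and codeg_W: "\<And>i. i < t \<Longrightarrow> 6 * t \<le> codeg V E {x, x', W i False, W i True}"
  shows "contains_copy V E (blowup2_V (theta_V t)) (blowup2_E (theta_E t))"
proof -
  define X where "X = {y, y'} \<union> case_prod W ` ({..<t} \<times> UNIV)"
  define N where "N i = common_nbhd V E {x, x', W i False, W i True}" for i
  have "card X \<le> card {y, y'} + card (case_prod W ` ({..<t} \<times> UNIV))"
    unfolding X_def by (rule card_Un_le)
  then have "card X + 2 * t \<le> 6 * t"
    using assms(2,3) card_case_prod_image_le[of W t] by simp
  moreover have "finite (N i)" for i
    using G by (simp add: N_def common_nbhd_def simple_graph_def)
  ultimately have "finite (N i) \<and> card X + 2 * t \<le> card (N i)" if "i < t" for i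
    using codeg_W[OF that] by (simp add: N_def codeg_def)
  moreover have "finite X"
    by (simp add: X_def)
  ultimately obtain U :: "nat \<Rightarrow> bool \<Rightarrow> 'a" where U: "\<forall>i<t. \<forall>b. U i b \<in> N i - X"
    and inj_U: "inj_on (case_prod U) ({..<t} \<times> UNIV)"
    using disjoint_pairs_in_large_sets[of X t N] by blast
  show ?thesis
    using contains_theta_blowupI[OF G assms(3-7) inj_U inj_W _ W] U
    by (simp add: X_def N_def)
qed

theorem lemma2p2:
  fixes V :: "'a set" and E :: "'a \<Rightarrow> 'a \<Rightarrow> bool" and t :: nat
    and x x' y y' :: 'a and R :: "'a set"
  assumes "simple_graph V E"
    and "t \<ge> 1"
    and "\<not> contains_copy V E (blowup2_V (theta_V t)) (blowup2_E (theta_E t))"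
    and "x \<in> V" "x' \<in> V" "y \<in> V" "y' \<in> V"
    and "distinct [x, x', y, y']"
    and "R \<subseteq> common_nbhd V E {y, y'} - {x, x'}"
  shows "card {(z, z'). z \<in> R \<and> z' \<in> R \<and> z \<noteq> z' \<and> codeg V E {x, x', z, z'} \<ge> 6 * t}
           \<le> 4 * t * card R"
proof (rule ccontr)
  define P where "P = {(z, z'). z \<in> R \<and> z' \<in> R \<and> z \<noteq> z' \<and> codeg V E {x, x', z, z'} \<ge> 6 * t}"
  assume "\<not> card P \<le> 4 * t * card R"
  moreover have "finite R"
    using assms(1,9) by (auto simp: common_nbhd_def simple_graph_def intro: finite_subset)
  moreover have "P \<subseteq> R \<times> R" "\<And>z. (z, z) \<notin> P"
    by (auto simp: P_def)
  ultimately obtain W where W_P: "\<forall>i<t. (W i False, W i True) \<in> P"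
    and inj_W: "inj_on (case_prod W) ({..<t} \<times> UNIV)"
    using disjoint_pairs_from_many_pairs[of R P t] by (meson not_le)
  have "W i b \<in> common_nbhd V E {y, y'} - {x, x'}" if "i < t" for i b
    using W_P that assms(9) by (cases b) (auto simp: P_def)
  moreover have "6 * t \<le> codeg V E {x, x', W i False, W i True}" if "i < t" for i
    using W_P that by (simp add: P_def)
  ultimately have "contains_copy V E (blowup2_V (theta_V t)) (blowup2_E (theta_E t))"
    by (rule contains_theta_blowup_from_codegree_pairs[OF assms(1,2,8,4-7) inj_W])
  with assms(3) show False ..
qed

end
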